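(* Let $A$ be a real symmetric matrix with $\mathrm{Tr}(A^2)=1$, let $q\in\mathbb{N}$, and let $\rho(A)=\max\{|\lambda|:\lambda\in\mathrm{spec}(A)\}$. If $\rho(A)\le 1/q$, then $$\mathcal{R}_q(A)\ge\prod_{k=1}^{q-1}\big(1-k\rho(A)\big).$$
   Context: For a real symmetric matrix $A$ with eigenvalues $(\lambda_i)$ (with multiplicity), $\mathcal{R}_q(A)=\sum\lambda_{i_1}^2\cdots\lambda_{i_q}^2$, the sum over ordered $q$-tuples of pairwise distinct indices. *)

theory Defs
  imports "Jordan_Normal_Form.Spectral_Radius" "HOL-Library.FuncSet"
begin

definition mat_trace :: "'a :: comm_ring_1 mat \<Rightarrow> 'a" where
  "mat_trace A = (\<Sum>i<dim_row A. A $$ (i, i))"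

definition real_spec_rad :: "real mat \<Rightarrow> real" where
  "real_spec_rad A = Max (abs ` spectrum A)"

text \<open>R_q of a list of eigenvalues (with multiplicity): sum over ordered q-tuples of
  pairwise distinct indices of the product of the squared eigenvalues.\<close>
definition R_q :: "nat \<Rightarrow> real list \<Rightarrow> real" where
  "R_q q ls = (\<Sum>f \<in> {f. f \<in> {..<q} \<rightarrow>\<^sub>E {..<length ls} \<and> inj_on f {..<q}}.
                 \<Prod>j<q. (ls ! f j)\<^sup>2)"

end

theory Submission
  imports Defs
begin

text \<open>Put \<open>x\<^sub>i = \<lambda>\<^sub>i\<^sup>2\<close>. Triangularising \<open>A\<close> by Schur's theorem gives
  \<open>\<Sum>\<^sub>i x\<^sub>i = Tr(A\<^sup>2) = 1\<close>, and \<open>x\<^sub>i \<le> \<rho>\<^sup>2\<close>. When an injective \<open>q\<close>-tuple of indices is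
  extended by a fresh index, the new factor ranges over all \<open>x\<^sub>i\<close> but \<open>q\<close> of them and so
  contributes at least \<open>1 - q\<rho>\<^sup>2\<close>. Induction on \<open>q\<close> gives
  \<open>R\<^sub>q(A) \<ge> (\<Prod>k<q. 1 - k\<rho>\<^sup>2)\<close>, and \<open>\<rho>\<^sup>2 \<le> \<rho> \<le> 1/q\<close> finishes the proof.\<close>

definition injective_tuples :: "nat \<Rightarrow> nat \<Rightarrow> (nat \<Rightarrow> nat) set" where
  "injective_tuples q m = {f. f \<in> {..<q} \<rightarrow>\<^sub>E {..<m} \<and> inj_on f {..<q}}"

lemma finite_injective_tuples: "finite (injective_tuples q m)"
  unfolding injective_tuples_def
  by (rule finite_subset[OF _ finite_PiE[of "{..<q}" "\<lambda>_. {..<m}"]]) auto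

lemma injective_tuples_0: "injective_tuples 0 m = {\<lambda>_. undefined}"
  unfolding injective_tuples_def by auto

lemma injective_tuples_Suc:
  "injective_tuples (Suc q) m =
     (\<lambda>(f, i). f(q := i)) ` (SIGMA f:injective_tuples q m. {..<m} - f ` {..<q})"
proof (intro equalityI subsetI)
  fix h assume h: "h \<in> injective_tuples (Suc q) m"
  then have "h(q := undefined) \<in> injective_tuples q m"
    unfolding injective_tuples_def by (auto simp: PiE_iff extensional_def inj_on_def)
  moreover have "h q \<in> {..<m} - h ` {..<q}"
    using h unfolding injective_tuples_def inj_on_def by fastforce
  ultimately show "h \<in> (\<lambda>(f, i). f(q := i)) ` (SIGMA f:injective_tuples q m. {..<m} - f ` {..<q})"
    by (intro image_eqI[where x = "(h(q := undefined), h q)"]) auto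
next
  fix h assume "h \<in> (\<lambda>(f, i). f(q := i)) ` (SIGMA f:injective_tuples q m. {..<m} - f ` {..<q})"
  then obtain f i where f: "f \<in> injective_tuples q m" and i: "i \<in> {..<m} - f ` {..<q}"
    and h: "h = f(q := i)"
    by auto
  then show "h \<in> injective_tuples (Suc q) m"
    unfolding injective_tuples_def
    by (auto simp: PiE_iff extensional_def inj_on_def less_Suc_eq)
qed

lemma inj_on_extend_injective_tuples:
  "inj_on (\<lambda>(f, i). f(q := i)) (SIGMA f:injective_tuples q m. {..<m} - f ` {..<q})"
proof (rule inj_onI, clarify)
  fix f i g k
  assume "f \<in> injective_tuples q m" "g \<in> injective_tuples q m" and eq: "f(q := i) = g(q := k)"
  then have "f q = undefined" "g q = undefined"
    unfolding injective_tuples_def by (auto simp: PiE_def extensional_def)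
  with eq show "f = g \<and> i = k"
    by (metis fun_upd_same fun_upd_triv fun_upd_upd)
qed

lemma sum_injective_tuples_Suc:
  "(\<Sum>h\<in>injective_tuples (Suc q) m. g h) =
     (\<Sum>f\<in>injective_tuples q m. \<Sum>i\<in>{..<m} - f ` {..<q}. g (f(q := i)))"
proof -
  have "(\<Sum>h\<in>injective_tuples (Suc q) m. g h) =
      (\<Sum>p\<in>(SIGMA f:injective_tuples q m. {..<m} - f ` {..<q}). g ((fst p)(q := snd p)))"
    unfolding injective_tuples_Suc
    by (subst sum.reindex[OF inj_on_extend_injective_tuples]) (simp add: case_prod_beta)
  also have "\<dots> = (\<Sum>f\<in>injective_tuples q m. \<Sum>i\<in>{..<m} - f ` {..<q}. g (f(q := i)))"
    by (subst sum.Sigma) (auto simp: finite_injective_tuples split_def)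
  finally show ?thesis .
qed

text \<open>\<open>q!\<close> times the elementary symmetric polynomial \<open>e\<^sub>q(x 0, \<dots>, x (m - 1))\<close>.\<close>
definition ordered_esym :: "(nat \<Rightarrow> real) \<Rightarrow> nat \<Rightarrow> nat \<Rightarrow> real" where
  "ordered_esym x m q = (\<Sum>f\<in>injective_tuples q m. \<Prod>j<q. x (f j))"

lemma ordered_esym_Suc_ge:
  assumes nonneg: "\<And>i. i < m \<Longrightarrow> 0 \<le> x i" and bounded: "\<And>i. i < m \<Longrightarrow> x i \<le> c"
  shows "((\<Sum>i<m. x i) - real q * c) * ordered_esym x m q \<le> ordered_esym x m (Suc q)"
proof -
  have "((\<Sum>i<m. x i) - real q * c) * ordered_esym x m q
      = (\<Sum>f\<in>injective_tuples q m. (\<Prod>j<q. x (f j)) * ((\<Sum>i<m. x i) - real q * c))"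
    unfolding ordered_esym_def by (simp add: sum_distrib_left mult.commute)
  also have "\<dots> \<le> (\<Sum>f\<in>injective_tuples q m. (\<Prod>j<q. x (f j)) * (\<Sum>i\<in>{..<m} - f ` {..<q}. x i))"
  proof (rule sum_mono)
    fix f assume "f \<in> injective_tuples q m"
    then have range: "f ` {..<q} \<subseteq> {..<m}" and inj: "inj_on f {..<q}"
      unfolding injective_tuples_def by auto
    have "(\<Sum>i\<in>{..<m} - f ` {..<q}. x i) = (\<Sum>i<m. x i) - (\<Sum>j<q. x (f j))"
      using range inj by (simp add: sum_diff sum.reindex)
    moreover have "(\<Sum>j<q. x (f j)) \<le> real q * c"
      using sum_mono[of "{..<q}" "\<lambda>j. x (f j)" "\<lambda>_. c"] range bounded by auto
    moreover have "0 \<le> (\<Prod>j<q. x (f j))"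
      using range nonneg by (intro prod_nonneg) auto
    ultimately show "(\<Prod>j<q. x (f j)) * ((\<Sum>i<m. x i) - real q * c)
        \<le> (\<Prod>j<q. x (f j)) * (\<Sum>i\<in>{..<m} - f ` {..<q}. x i)"
      by (simp add: mult_left_mono)
  qed
  also have "\<dots> = ordered_esym x m (Suc q)"
    unfolding ordered_esym_def sum_injective_tuples_Suc
    by (simp add: prod.lessThan_Suc sum_distrib_left)
  finally show ?thesis .
qed

lemma ordered_esym_ge_prod:
  assumes nonneg: "\<And>i. i < m \<Longrightarrow> 0 \<le> x i" and bounded: "\<And>i. i < m \<Longrightarrow> x i \<le> c"
    and "0 \<le> c" and "real q * c \<le> (\<Sum>i<m. x i) + c"
  shows "(\<Prod>k<q. (\<Sum>i<m. x i) - real k * c) \<le> ordered_esym x m q"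
  using assms(4)
proof (induction q)
  case 0
  show ?case by (simp add: ordered_esym_def injective_tuples_0)
next
  case (Suc q)
  let ?s = "\<Sum>i<m. x i"
  have "real q * c \<le> ?s" using Suc.prems by (simp add: algebra_simps)
  moreover have "(\<Prod>k<q. ?s - real k * c) \<le> ordered_esym x m q"
    using Suc.IH \<open>real q * c \<le> ?s\<close> \<open>0 \<le> c\<close> by simp
  ultimately have "(?s - real q * c) * (\<Prod>k<q. ?s - real k * c)
      \<le> (?s - real q * c) * ordered_esym x m q"
    by (intro mult_left_mono) auto
  then have "(\<Prod>k<Suc q. ?s - real k * c) \<le> (?s - real q * c) * ordered_esym x m q"
    by (simp add: prod.lessThan_Suc mult.commute)
  also have "\<dots> \<le> ordered_esym x m (Suc q)"
    by (rule ordered_esym_Suc_ge[OF nonneg bounded])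
  finally show ?case .
qed

lemma R_q_ge_prod:
  assumes sum_sq: "(\<Sum>a\<leftarrow>ls. a\<^sup>2) = 1" and bounded: "\<And>a. a \<in> set ls \<Longrightarrow> \<bar>a\<bar> \<le> r"
    and qr: "real q * r \<le> 1"
  shows "(\<Prod>k = 1..<q. 1 - real k * r) \<le> R_q q ls"
proof -
  let ?x = "\<lambda>i. (ls ! i)\<^sup>2"
  have sum_x: "(\<Sum>i<length ls. ?x i) = 1"
    using sum_sq by (simp add: sum_list_sum_nth atLeast0LessThan)
  have "ls \<noteq> []" using sum_sq by auto
  then have "0 \<le> r" using bounded[of "hd ls"] by auto
  have x_le: "?x i \<le> r\<^sup>2" if "i < length ls" for i
    using bounded[of "ls ! i"] that by (metis abs_ge_zero power2_abs power_mono nth_mem)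
  have "real q * r\<^sup>2 \<le> r"
    using mult_right_mono[OF qr \<open>0 \<le> r\<close>] by (simp add: power2_eq_square mult.assoc)
  also have "r \<le> 1 + r\<^sup>2"
    using zero_le_power2[of "r - 1"] \<open>0 \<le> r\<close> by (simp add: power2_diff)
  finally have "real q * r\<^sup>2 \<le> 1 + r\<^sup>2" .
  then have "(\<Prod>k<q. 1 - real k * r\<^sup>2) \<le> R_q q ls"
    using ordered_esym_ge_prod[of "length ls" ?x "r\<^sup>2" q] sum_x x_le
    by (simp add: R_q_def ordered_esym_def injective_tuples_def)
  moreover have "(\<Prod>k = 1..<q. 1 - real k * r) \<le> (\<Prod>k = 1..<q. 1 - real k * r\<^sup>2)"
  proof (rule prod_mono)
    fix k assume k: "k \<in> {1..<q}"
    have "real k * r \<le> real q * r"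
      using k \<open>0 \<le> r\<close> by (intro mult_right_mono) auto
    with qr have "real k * r \<le> 1" by linarith
    moreover have "r \<le> real k * r" using mult_right_mono[of 1 "real k" r] k \<open>0 \<le> r\<close> by simp
    ultimately have "r\<^sup>2 \<le> r"
      using \<open>0 \<le> r\<close> by (simp add: power2_eq_square mult_left_le)
    with \<open>real k * r \<le> 1\<close> show "0 \<le> 1 - real k * r \<and> 1 - real k * r \<le> 1 - real k * r\<^sup>2"
      by (simp add: mult_left_mono)
  qed
  moreover have "(\<Prod>k = 1..<q. 1 - real k * r\<^sup>2) = (\<Prod>k<q. 1 - real k * r\<^sup>2)"
  proof (cases "q = 0")
    case False
    then have "{..<q} = insert 0 {1..<q}" by auto
    then show ?thesis by simp
  qed simp
  ultimately show ?thesis by linarith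
qed

lemma mat_trace_mult:
  assumes "A \<in> carrier_mat n m" and "B \<in> carrier_mat m n"
  shows "mat_trace (A * B) = (\<Sum>i<n. \<Sum>k<m. A $$ (i, k) * B $$ (k, i))"
  using assms unfolding mat_trace_def by (simp add: scalar_prod_def lessThan_atLeast0)

lemma mat_trace_mult_comm:
  assumes "A \<in> carrier_mat n m" and "B \<in> carrier_mat m n"
  shows "mat_trace (A * B) = mat_trace (B * A)"
proof -
  have "mat_trace (A * B) = (\<Sum>k<m. \<Sum>i<n. A $$ (i, k) * B $$ (k, i))"
    unfolding mat_trace_mult[OF assms] by (rule sum.swap)
  also have "\<dots> = mat_trace (B * A)"
    unfolding mat_trace_mult[OF assms(2,1)] by (simp only: mult.commute)
  finally show ?thesis .
qed

lemma mat_trace_square_upper_triangular: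
  assumes B: "B \<in> carrier_mat n n" and "upper_triangular B"
  shows "mat_trace (B * B) = (\<Sum>i<n. (B $$ (i, i))\<^sup>2)"
  unfolding mat_trace_mult[OF B B]
proof (rule sum.cong[OF refl])
  fix i assume i: "i \<in> {..<n}"
  have "B $$ (i, k) * B $$ (k, i) = 0" if "k \<in> {..<n} - {i}" for k
  proof (cases "k < i")
    case True
    then show ?thesis using upper_triangularD[OF \<open>upper_triangular B\<close> True] i B by simp
  next
    case False
    then have "i < k" using that by auto
    then show ?thesis using upper_triangularD[OF \<open>upper_triangular B\<close> \<open>i < k\<close>] that B by simp
  qed
  then have "(\<Sum>k<n. B $$ (i, k) * B $$ (k, i)) = B $$ (i, i) * B $$ (i, i)"
    using i by (subst sum.mono_neutral_right[of _ "{i}"]) auto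
  then show "(\<Sum>k<n. B $$ (i, k) * B $$ (k, i)) = (B $$ (i, i))\<^sup>2"
    by (simp add: power2_eq_square)
qed

lemma mat_trace_similar:
  assumes "similar_mat_wit A B P Q"
  shows "mat_trace A = mat_trace B"
proof -
  from similar_mat_witD[OF refl assms] obtain n where carrier:
    "B \<in> carrier_mat n n" "P \<in> carrier_mat n n" "Q \<in> carrier_mat n n"
    and "Q * P = 1\<^sub>m n" "A = P * B * Q"
    by blast
  then have "mat_trace A = mat_trace (P * (B * Q))" by (simp add: assoc_mult_mat[of _ n n])
  also have "\<dots> = mat_trace (B * Q * P)"
    using carrier by (intro mat_trace_mult_comm) auto
  also have "\<dots> = mat_trace B"
    using carrier \<open>Q * P = 1\<^sub>m n\<close> by (simp add: assoc_mult_mat[of _ n n])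
  finally show ?thesis .
qed

lemma mat_trace_square_eq_sum_squares_eigenvalues:
  fixes A :: "'a :: conjugatable_ordered_field mat"
  assumes "A \<in> carrier_mat n n" and "char_poly A = (\<Prod>a\<leftarrow>ls. [:- a, 1:])"
  shows "mat_trace (A * A) = (\<Sum>a\<leftarrow>ls. a\<^sup>2)"
proof -
  obtain B P Q where schur: "schur_decomposition A ls = (B, P, Q)"
    by (cases "schur_decomposition A ls") auto
  with schur_decomposition[OF assms] have sim: "similar_mat_wit A B P Q"
    and "upper_triangular B" and diag: "diag_mat B = ls"
    by auto
  have B: "B \<in> carrier_mat n n" using similar_mat_witD2(5)[OF assms(1) sim] .
  have "similar_mat_wit (A * A) (B * B) P Q"
    using similar_mat_wit_pow[OF sim, of 2] assms(1) B by (simp add: numeral_2_eq_2)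
  then have "mat_trace (A * A) = mat_trace (B * B)" by (rule mat_trace_similar)
  also have "\<dots> = (\<Sum>i<n. (B $$ (i, i))\<^sup>2)"
    using B \<open>upper_triangular B\<close> by (rule mat_trace_square_upper_triangular)
  also have "\<dots> = (\<Sum>a\<leftarrow>ls. a\<^sup>2)"
    using B by (simp add: diag[symmetric] diag_mat_def sum_list_sum_nth atLeast0LessThan)
  finally show ?thesis .
qed

lemma abs_le_real_spec_rad:
  assumes "A \<in> carrier_mat n n" and "a \<in> spectrum A"
  shows "\<bar>a\<bar> \<le> real_spec_rad A"
  unfolding real_spec_rad_def using card_finite_spectrum(1)[OF assms(1)] assms(2) by auto

lemma set_linear_factors_subset_spectrum:
  fixes A :: "'a :: field mat"
  assumes "A \<in> carrier_mat n n" and "char_poly A = (\<Prod>a\<leftarrow>ls. [:- a, 1:])"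
  shows "set ls \<subseteq> spectrum A"
  using linear_poly_root spectrum_root_char_poly[OF assms(1)] assms(2) by auto

theorem lemma4p2:
  fixes A :: "real mat" and n q :: nat and ls :: "real list"
  assumes "A \<in> carrier_mat n n"
    and "transpose_mat A = A"
    and "char_poly A = (\<Prod>a\<leftarrow>ls. [:- a, 1:])"
    and "mat_trace (A * A) = 1"
    and "real_spec_rad A \<le> 1 / real q"
  shows "R_q q ls \<ge> (\<Prod>k = 1..<q. (1 - real k * real_spec_rad A))"
proof (rule R_q_ge_prod)
  show "(\<Sum>a\<leftarrow>ls. a\<^sup>2) = 1"
    using mat_trace_square_eq_sum_squares_eigenvalues[OF assms(1,3)] assms(4) by simp
  show "\<bar>a\<bar> \<le> real_spec_rad A" if "a \<in> set ls" for a
    using abs_le_real_spec_rad[OF assms(1)] set_linear_factors_subset_spectrum[OF assms(1,3)] that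
    by blast
  show "real q * real_spec_rad A \<le> 1"
    using assms(5) by (cases "q = 0") (simp_all add: field_simps)
qed

end
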